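(* For $1<r<\infty$, the function $G(z)=r\big(1-(1-\frac1z)^{1/r}\big)$ (principal power) is the Cauchy transform on $\mathbb{C}_+$ of the beta distribution $B(1-\frac1r,1+\frac1r)$: \[ \mu(dx)=\frac{r\sin(\pi/r)}{\pi}\,x^{-1/r}(1-x)^{1/r}\,dx,\qquad 0<x<1. \] That is, $\mu^{1}_{-1,r}=B(1-\frac1r,1+\frac1r)$.
   Context: $\mu^{1}_{-1,r}$ denotes the probability measure on $\mathbb{R}$ whose Cauchy transform $\int\frac{\mu(dx)}{z-x}$ on $\mathbb{C}_+$ equals $r\big(1-(1-\frac1z)^{1/r}\big)$, where $w^{1/r}$ is the principal power on $\mathbb{C}\setminus(-\infty,0]$ (this is the case $\alpha=1$, $s=-1$ of the family $G^\alpha_{s,r}(z)=-r^{1/\alpha}\big(\frac{1-(1-s(-1/z)^\alpha)^{1/r}}{s}\big)^{1/\alpha}$). *)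

theory Defs
  imports "HOL-Probability.Probability"
begin

definition beta_dens :: "real \<Rightarrow> real \<Rightarrow> real" where
  "beta_dens r x = (if 0 < x \<and> x < 1
     then r * sin (pi / r) / pi * x powr (- 1 / r) * (1 - x) powr (1 / r) else 0)"

definition beta_measure :: "real \<Rightarrow> real measure" where
  "beta_measure r = density lborel (\<lambda>x. ennreal (beta_dens r x))"

definition cauchy_transform :: "real measure \<Rightarrow> complex \<Rightarrow> complex" where
  "cauchy_transform M z = (\<integral>x. 1 / (z - complex_of_real x) \<partial>M)"

text \<open>G(z) = r (1 - (1 - 1/z)^(1/r)) with the principal power (complex powr uses principal Ln).\<close>
definition G_fun :: "real \<Rightarrow> complex \<Rightarrow> complex" where
  "G_fun r z = complex_of_real r * (1 - (1 - 1 / z) powr complex_of_real (1 / r))"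

end

theory Submission
  imports Defs
begin

(*
  Write a = 1/r \<in> (0,1) and F for the Cauchy transform of the measure mu = beta_measure r.
  The proof identifies F by the first-order differential equation it satisfies.

  1. mu is a probability measure: its total mass is c * Beta(1-a, 1+a), and Euler's
     reflection formula gives Beta(1-a, 1+a) = a pi / sin(pi a) = 1/c.
  2. For every probability measure on the real line the Cauchy transform is bounded by
     1/Im z, holomorphic on the upper half-plane with F' = -Q, where
     Q z = \<integral> 1/(z-x)^2, and F(i y) \<rightarrow> 0 as y \<rightarrow> \<infinity>.
  3. Integration by parts against the beta density, i.e. the fundamental theorem of
     calculus applied to x^(1-a) (1-x)^(1+a) * (-1/(z-x)), yields z(z-1) Q z = 1 - a F z,
     hence the ODE  z(z-1) F' z = a F z - 1.
  4. On the upper half-plane every solution of this ODE that vanishes at i\<infinity> is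
     (1 - (1 - 1/z)^a)/a: the quantity (1 - a F z) (1 - 1/z)^(-a) has derivative zero,
     so it is constant, and its limit along the imaginary axis is 1.
  The main theorem combines steps 1-4.
*)

section \<open>The beta density\<close>

text \<open>For r > 1 the density is c x^(-a) (1-x)^a on [0,1] (the endpoints are null sets, so
  including them is harmless and matches the Beta integral of the library).\<close>

lemma beta_dens_eq:
  assumes "1 < r"
  shows "beta_dens r x =
    indicator {0..1} x * (r * sin (pi / r) / pi * (x powr (- (1/r)) * (1 - x) powr (1/r)))"
  using assms by (auto simp: beta_dens_def indicator_def)

lemma sin_pi_div_pos: "1 < r \<Longrightarrow> 0 < sin (pi / r)"
  by (intro sin_gt_zero) (auto simp: field_simps)

lemma beta_dens_nonneg: "1 < r \<Longrightarrow> 0 \<le> beta_dens r x"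
  using sin_pi_div_pos[of r] by (auto simp: beta_dens_def)

lemma borel_measurable_beta_dens: "beta_dens r \<in> borel_measurable borel"
  unfolding beta_dens_def by measurable

lemma sets_beta_measure: "sets (beta_measure r) = sets borel"
  by (simp add: beta_measure_def)

lemma Beta_one_minus_one_plus:
  fixes a :: real assumes "0 < a" "a < 1"
  shows "Beta (1 - a) (1 + a) = a * pi / sin (pi * a)"
proof -
  have "complex_of_real (Gamma a * Gamma (1 - a))
          = Gamma (complex_of_real a) * Gamma (1 - complex_of_real a)"
    using Gamma_complex_of_real[of "1 - a"] by (simp add: Gamma_complex_of_real)
  also have "\<dots> = of_real pi / sin (of_real pi * of_real a)"
    by (rule Gamma_reflection_complex)
  also have "sin (of_real pi * of_real a) = complex_of_real (sin (pi * a))"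
    by (metis of_real_mult sin_of_real)
  finally have reflection: "Gamma a * Gamma (1 - a) = pi / sin (pi * a)"
    by (metis of_real_divide of_real_eq_iff)
  have "a \<notin> \<int>\<^sub>\<le>\<^sub>0" using assms nonpos_Ints_nonpos by fastforce
  then have "Gamma (1 + a) = a * Gamma a"
    using Gamma_plus1[of a] by (simp add: add.commute)
  moreover have "Gamma (2::real) = 1"
    using Gamma_fact[of 1] by simp
  ultimately show ?thesis
    using reflection by (simp add: Beta_def field_simps)
qed

lemma prob_space_beta_measure:
  assumes "1 < r" shows "prob_space (beta_measure r)"
proof (rule prob_spaceI)
  define a where "a = 1 / r"
  define c where "c = r * sin (pi / r) / pi"
  have a: "0 < a" "a < 1" using assms by (auto simp: a_def)
  have c: "0 \<le> c" using sin_pi_div_pos[OF assms] assms by (simp add: c_def)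
  have "c * Beta (1 - a) (1 + a) = 1"
    using Beta_one_minus_one_plus[OF a] sin_pi_div_pos[OF assms] assms
    unfolding c_def a_def by (simp add: field_simps)
  then have density_integral: "((\<lambda>t. c * (t powr (-a) * (1-t) powr a)) has_integral 1) {0..1}"
    using has_integral_mult_right[OF has_integral_Beta_real[of "1-a" "1+a"], of c] a by simp
  have "emeasure (beta_measure r) (space (beta_measure r)) = (\<integral>\<^sup>+ x. ennreal (beta_dens r x) \<partial>lborel)"
    unfolding beta_measure_def
    by (subst emeasure_density) (use borel_measurable_beta_dens in auto)
  also have "\<dots> = (\<integral>\<^sup>+ x. ennreal (indicator {0..1} x * (c * (x powr (-a) * (1-x) powr a))) \<partial>lborel)"
    using beta_dens_eq[OF assms] unfolding c_def a_def by simp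
  also have "\<dots> = 1"
    by (subst nn_integral_has_integral_lebesgue[OF _ density_integral]) (auto intro!: mult_nonneg_nonneg c)
  finally show "emeasure (beta_measure r) (space (beta_measure r)) = 1" .
qed

section \<open>Cauchy transforms of probability measures on the real line\<close>

lemma norm_cauchy_kernel_le:
  fixes z :: complex assumes "Im z > 0"
  shows "norm (1 / (z - complex_of_real x)) \<le> 1 / Im z"
proof -
  have "Im z \<le> norm (z - complex_of_real x)"
    using abs_Im_le_cmod[of "z - complex_of_real x"] assms by simp
  then show ?thesis using assms by (simp add: norm_divide frac_le)
qed

lemma integrable_bounded_borel:
  fixes f :: "real \<Rightarrow> 'b::{banach, second_countable_topology}"
  assumes "prob_space M" "sets M = sets borel" "f \<in> borel_measurable borel" "\<And>x. norm (f x) \<le> B"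
  shows "integrable M f"
proof -
  interpret prob_space M by fact
  have "f \<in> borel_measurable M"
    using assms(2,3) measurable_cong_sets[OF assms(2) refl] by simp
  with assms(4) show ?thesis
    by (intro integrable_const_bound[where B=B]) auto
qed

lemma norm_integral_bounded_borel_le:
  fixes f :: "real \<Rightarrow> 'b::{banach, second_countable_topology}"
  assumes "prob_space M" "sets M = sets borel" "f \<in> borel_measurable borel" "\<And>x. norm (f x) \<le> B"
  shows "norm (integral\<^sup>L M f) \<le> B"
proof -
  interpret prob_space M by fact
  have "integrable M f" by (rule integrable_bounded_borel[OF assms])
  then have "(\<integral>x. norm (f x) \<partial>M) \<le> B"
    by (intro integral_le_const) (use assms in auto)
  then show ?thesis
    using integral_norm_bound[of M f] by linarith
qed

lemma integrable_cauchy_kernel: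
  assumes "prob_space M" "sets M = sets borel" "Im z > 0"
  shows "integrable M (\<lambda>x. 1 / (z - complex_of_real x))"
  by (rule integrable_bounded_borel[OF assms(1,2) _ norm_cauchy_kernel_le[OF assms(3)]]) measurable

lemma integrable_cauchy_kernel_sq:
  assumes "prob_space M" "sets M = sets borel" "Im z > 0"
  shows "integrable M (\<lambda>x. 1 / (z - complex_of_real x)^2)"
proof (rule integrable_bounded_borel[OF assms(1,2), where B="(1/Im z)^2"])
  show "norm (1 / (z - complex_of_real x)^2) \<le> (1/Im z)^2" for x
    using norm_cauchy_kernel_le[OF assms(3), of x]
    by (metis norm_ge_zero norm_power power_mono power_one_over)
qed measurable

lemma norm_cauchy_transform_le:
  assumes "prob_space M" "sets M = sets borel" "Im z > 0"
  shows "norm (cauchy_transform M z) \<le> 1 / Im z"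
  unfolding cauchy_transform_def
  by (rule norm_integral_bounded_borel_le[OF assms(1,2) _ norm_cauchy_kernel_le[OF assms(3)]])
     measurable

lemma cauchy_transform_tendsto_zero:
  assumes "prob_space M" "sets M = sets borel"
  shows "((\<lambda>y. cauchy_transform M (\<i> * complex_of_real y)) \<longlongrightarrow> 0) at_top"
proof (rule Lim_null_comparison)
  show "\<forall>\<^sub>F y in at_top. norm (cauchy_transform M (\<i> * complex_of_real y)) \<le> 1 / y"
    using eventually_gt_at_top[of 0]
  proof eventually_elim
    case (elim y)
    then show ?case
      using norm_cauchy_transform_le[OF assms, of "\<i> * complex_of_real y"] by simp
  qed
  show "((\<lambda>y. 1 / y) \<longlongrightarrow> (0::real)) at_top"
    using tendsto_inverse_0_at_top[OF filterlim_ident] by (simp add: divide_inverse)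
qed

text \<open>Differentiability: the difference quotient of the Cauchy transform at z0 differs from
  -Q z0 by the integral of a kernel which is O(|z - z0|) uniformly in x.\<close>

lemma cauchy_kernel_difference_quotient:
  fixes u v :: complex assumes "u \<noteq> 0" "v \<noteq> 0" "u \<noteq> v"
  shows "(1 / u - 1 / v) / (u - v) + 1 / v^2 = (u - v) / (u * v^2)"
  using assms by (simp add: field_simps power2_eq_square)

lemma norm_cauchy_remainder_le:
  fixes z z0 :: complex and d :: real
  assumes "0 < d" "d / 2 < Im z" "d \<le> Im z0"
  shows "norm ((z - z0) / ((z - complex_of_real x) * (z0 - complex_of_real x)^2))
           \<le> norm (z - z0) * (2 / d^3)"
proof -
  have "d / 2 \<le> norm (z - complex_of_real x)"
    using abs_Im_le_cmod[of "z - complex_of_real x"] assms by simp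
  moreover have "d \<le> norm (z0 - complex_of_real x)"
    using abs_Im_le_cmod[of "z0 - complex_of_real x"] assms by simp
  ultimately have le: "(d/2) * d^2 \<le> norm (z - complex_of_real x) * norm (z0 - complex_of_real x)^2"
    using assms by (intro mult_mono power_mono) auto
  have "norm (z - z0) / (norm (z - complex_of_real x) * norm (z0 - complex_of_real x)^2)
          \<le> norm (z - z0) / ((d/2) * d^2)"
    using le assms by (intro divide_left_mono) (auto intro!: mult_pos_pos)
  then show ?thesis
    by (simp add: norm_divide norm_mult norm_power power3_eq_cube power2_eq_square)
qed

lemma cauchy_transform_difference_quotient_bound:
  assumes M: "prob_space M" "sets M = sets borel" and z0: "Im z0 > 0"
    and z: "z \<noteq> z0" "dist z z0 < Im z0 / 2"
  shows "norm ((cauchy_transform M z - cauchy_transform M z0) / (z - z0)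
                + (\<integral>x. 1 / (z0 - complex_of_real x)^2 \<partial>M))
           \<le> norm (z - z0) * (2 / Im z0 ^ 3)"
proof -
  have "\<bar>Im z - Im z0\<bar> \<le> norm (z - z0)" using abs_Im_le_cmod[of "z - z0"] by simp
  then have Im_z: "Im z0 / 2 < Im z" using z by (simp add: dist_norm)
  have nonzero: "z - complex_of_real x \<noteq> 0" "z0 - complex_of_real x \<noteq> 0" for x
    using Im_z z0 by (auto simp: complex_eq_iff)
  have int_z: "integrable M (\<lambda>x. 1 / (z - complex_of_real x))"
    using integrable_cauchy_kernel[OF M] Im_z z0 by simp
  have int_z0: "integrable M (\<lambda>x. 1 / (z0 - complex_of_real x))"
    by (rule integrable_cauchy_kernel[OF M z0])
  have int_sq: "integrable M (\<lambda>x. 1 / (z0 - complex_of_real x)^2)"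
    by (rule integrable_cauchy_kernel_sq[OF M z0])
  have "(cauchy_transform M z - cauchy_transform M z0) / (z - z0)
          + (\<integral>x. 1 / (z0 - complex_of_real x)^2 \<partial>M)
        = (\<integral>x. (1 / (z - complex_of_real x) - 1 / (z0 - complex_of_real x)) / (z - z0)
              + 1 / (z0 - complex_of_real x)^2 \<partial>M)"
    unfolding cauchy_transform_def
    using int_z int_z0 int_sq by simp
  also have "\<dots> = (\<integral>x. (z - z0) / ((z - complex_of_real x) * (z0 - complex_of_real x)^2) \<partial>M)"
  proof (rule Bochner_Integration.integral_cong[OF refl])
    fix x
    have "z - complex_of_real x \<noteq> z0 - complex_of_real x" using z(1) by simp
    then show "(1 / (z - complex_of_real x) - 1 / (z0 - complex_of_real x)) / (z - z0)
                + 1 / (z0 - complex_of_real x)^2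
              = (z - z0) / ((z - complex_of_real x) * (z0 - complex_of_real x)^2)"
      using cauchy_kernel_difference_quotient[OF nonzero(1)[of x] nonzero(2)[of x]] by simp
  qed
  also have "norm \<dots> \<le> norm (z - z0) * (2 / Im z0 ^ 3)"
    by (rule norm_integral_bounded_borel_le[OF M _ norm_cauchy_remainder_le])
       (use z0 Im_z in auto)
  finally show ?thesis .
qed

lemma cauchy_transform_has_derivative:
  assumes M: "prob_space M" "sets M = sets borel" and z0: "Im z0 > 0"
  shows "(cauchy_transform M has_field_derivative
           - (\<integral>x. 1 / (z0 - complex_of_real x)^2 \<partial>M)) (at z0)"
proof -
  let ?F = "cauchy_transform M" and ?Q = "\<integral>x. 1 / (z0 - complex_of_real x)^2 \<partial>M"
  have "((\<lambda>z. (?F z - ?F z0) / (z - z0) + ?Q) \<longlongrightarrow> 0) (at z0)"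
  proof (rule Lim_null_comparison)
    show "\<forall>\<^sub>F z in at z0. norm ((?F z - ?F z0) / (z - z0) + ?Q) \<le> norm (z - z0) * (2 / Im z0 ^ 3)"
      unfolding eventually_at using z0 cauchy_transform_difference_quotient_bound[OF M z0]
      by (intro exI[of _ "Im z0 / 2"]) auto
    have "((\<lambda>z. norm (z - z0) * (2 / Im z0 ^ 3)) \<longlongrightarrow> norm (z0 - z0) * (2 / Im z0 ^ 3)) (at z0)"
      by (intro tendsto_intros)
    then show "((\<lambda>z. norm (z - z0) * (2 / Im z0 ^ 3)) \<longlongrightarrow> 0) (at z0)" by simp
  qed
  then have "((\<lambda>z. (?F z - ?F z0) / (z - z0)) \<longlongrightarrow> - ?Q) (at z0)"
    by (subst Lim_null) simp
  then show ?thesis unfolding has_field_derivative_iff .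
qed

lemma integrable_cauchy_combination:
  assumes M: "prob_space M" "sets M = sets borel" and z: "Im z > 0"
  shows "integrable M (\<lambda>x. z*(z-1) / (z - complex_of_real x)^2 - 1 + a / (z - complex_of_real x))"
proof -
  interpret prob_space M by (rule M(1))
  show ?thesis
    using integrable_mult_right[OF integrable_cauchy_kernel[OF M z], of a]
      integrable_mult_right[OF integrable_cauchy_kernel_sq[OF M z], of "z*(z-1)"]
    by simp
qed

lemma integral_cauchy_combination:
  assumes M: "prob_space M" "sets M = sets borel" and z: "Im z > 0"
  shows "(\<integral>x. z*(z-1) / (z - complex_of_real x)^2 - 1 + a / (z - complex_of_real x) \<partial>M)
           = z*(z-1) * (\<integral>x. 1 / (z - complex_of_real x)^2 \<partial>M) - 1 + a * cauchy_transform M z"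
proof -
  interpret prob_space M by (rule M(1))
  have int1: "integrable M (\<lambda>x. a / (z - complex_of_real x))"
    using integrable_mult_right[OF integrable_cauchy_kernel[OF M z], of a] by simp
  have int2: "integrable M (\<lambda>x. z*(z-1) / (z - complex_of_real x)^2)"
    using integrable_mult_right[OF integrable_cauchy_kernel_sq[OF M z], of "z*(z-1)"] by simp
  have "(\<integral>x. z*(z-1) / (z - complex_of_real x)^2 - 1 + a / (z - complex_of_real x) \<partial>M)
      = (\<integral>x. z*(z-1) / (z - complex_of_real x)^2 \<partial>M) - (\<integral>x. 1 \<partial>M)
        + (\<integral>x. a / (z - complex_of_real x) \<partial>M)"
    using int1 int2 by simp
  also have "(\<integral>x. z*(z-1) / (z - complex_of_real x)^2 \<partial>M)
               = z*(z-1) * (\<integral>x. 1 / (z - complex_of_real x)^2 \<partial>M)"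
    using integral_mult_right_zero[of M "z*(z-1)" "\<lambda>x. 1 / (z - complex_of_real x)^2"] by simp
  also have "(\<integral>x. a / (z - complex_of_real x) \<partial>M) = a * cauchy_transform M z"
    using integral_mult_right_zero[of M a "\<lambda>x. 1 / (z - complex_of_real x)"]
    by (simp add: cauchy_transform_def)
  finally show ?thesis by (simp add: prob_space)
qed

section \<open>Integration by parts against the beta density\<close>

text \<open>Partial fractions in x of the kernel appearing above; the right-hand side is what the
  derivative of x^(1-a) (1-x)^(1+a) * (-1/(z-x)) produces, after dividing by x^(-a) (1-x)^a.\<close>

lemma cauchy_combination_partial_fractions:
  fixes z x a :: complex assumes "z \<noteq> x"
  shows "z*(z-1) / (z-x)^2 - 1 + a / (z-x) = (2*x - 1 + a) / (z-x) + x*(x-1) / (z-x)^2"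
proof -
  have "z*(z-1) = (z-x)^2 + (2*x-1)*(z-x) + x*(x-1)" by algebra
  then have "z*(z-1) / (z-x)^2 = 1 + (2*x-1) / (z-x) + x*(x-1) / (z-x)^2"
    using assms by (simp add: add_divide_distrib power2_eq_square)
  then show ?thesis by (simp add: add_divide_distrib diff_divide_distrib algebra_simps)
qed

lemma beta_by_parts_derivative:
  fixes z :: complex and a x :: real
  assumes z: "Im z > 0" and x: "0 < x" "x < 1"
  shows "((\<lambda>t. (t powr (1-a) * (1-t) powr (1+a)) *\<^sub>R (-1 / (z - complex_of_real t)))
          has_vector_derivative
            (x powr (-a) * (1-x) powr a) *\<^sub>R
              ((2*complex_of_real x - 1 + complex_of_real a) / (z - complex_of_real x)
               + complex_of_real x * (complex_of_real x - 1) / (z - complex_of_real x)^2)) (at x)"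
proof -
  define X where "X = x powr (-a)"
  define Y where "Y = (1-x) powr a"
  have nonzero: "z - complex_of_real x \<noteq> 0" using z by (auto simp: complex_eq_iff)
  have d1: "((\<lambda>t. t powr (1-a)) has_real_derivative (1-a) * X) (at x)"
    using has_real_derivative_powr[OF x(1), of "1-a"] by (simp add: X_def)
  have "((\<lambda>t. t powr (1+a)) has_real_derivative (1+a) * Y) (at (1-x))"
    using has_real_derivative_powr[of "1-x" "1+a"] x by (simp add: Y_def)
  moreover have "((\<lambda>t. 1 - t) has_real_derivative -1) (at x)"
    by (auto intro!: derivative_eq_intros)
  ultimately have d2: "((\<lambda>t. (1-t) powr (1+a)) has_real_derivative - ((1+a) * Y)) (at x)"
    using DERIV_chain2[OF _ \<open>((\<lambda>t. 1 - t) has_real_derivative -1) (at x)\<close>] by simp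
  have dR: "((\<lambda>t. -1 / (z - complex_of_real t)) has_vector_derivative
               -1 / (z - complex_of_real x)^2) (at x)"
  proof (rule has_vector_derivative_real_field)
    show "((\<lambda>w. -1 / (z - w)) has_field_derivative -1 / (z - complex_of_real x)^2)
            (at (complex_of_real x))"
      using nonzero by (auto intro!: derivative_eq_intros simp: field_simps power2_eq_square)
  qed
  have D: "((\<lambda>t. (t powr (1-a) * (1-t) powr (1+a)) *\<^sub>R (-1 / (z - complex_of_real t)))
      has_vector_derivative
        (x powr (1-a) * (1-x) powr (1+a)) *\<^sub>R (-1 / (z - complex_of_real x)^2)
        + ((1-a) * X * (1-x) powr (1+a) + - ((1+a) * Y) * x powr (1-a))
            *\<^sub>R (-1 / (z - complex_of_real x))) (at x)"
    by (rule has_vector_derivative_scaleR[OF DERIV_mult[OF d1 d2] dR])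
  have e1: "x powr (1-a) = x * X" unfolding X_def using powr_add[of x 1 "-a"] x by simp
  have e2: "(1-x) powr (1+a) = (1-x) * Y" unfolding Y_def using powr_add[of "1-x" 1 a] x by simp
  have "(x powr (1-a) * (1-x) powr (1+a)) *\<^sub>R (-1 / (z - complex_of_real x)^2)
        + ((1-a) * X * (1-x) powr (1+a) + - ((1+a) * Y) * x powr (1-a))
            *\<^sub>R (-1 / (z - complex_of_real x))
      = (X * Y) *\<^sub>R
          ((2*complex_of_real x - 1 + complex_of_real a) / (z - complex_of_real x)
           + complex_of_real x * (complex_of_real x - 1) / (z - complex_of_real x)^2)"
  proof -
    have "complex_of_real (x * X * ((1-x) * Y)) * (-1 / u^2)
          + complex_of_real ((1-a) * X * ((1-x) * Y) + - ((1+a) * Y) * (x * X)) * (-1 / u)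
        = complex_of_real (X * Y) *
            ((2*complex_of_real x - 1 + complex_of_real a) / u
             + complex_of_real x * (complex_of_real x - 1) / u^2)" if "u \<noteq> 0" for u :: complex
      using that by (simp add: field_simps power2_eq_square)
    from this[OF nonzero] show ?thesis unfolding e1 e2 scaleR_conv_of_real .
  qed
  then show ?thesis using D unfolding X_def Y_def by simp
qed

text \<open>The boundary terms vanish since x^(1-a) (1-x)^(1+a) is zero at both endpoints.\<close>

lemma beta_by_parts:
  fixes z :: complex and a :: real
  assumes z: "Im z > 0" and a: "0 < a" "a < 1"
  shows "((\<lambda>x. (x powr (-a) * (1-x) powr a) *\<^sub>R
            ((2*complex_of_real x - 1 + complex_of_real a) / (z - complex_of_real x)
             + complex_of_real x * (complex_of_real x - 1) / (z - complex_of_real x)^2))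
          has_integral 0) {0..1}"
proof -
  define P where "P = (\<lambda>x::real. x powr (1-a) * (1-x) powr (1+a))"
  define R where "R = (\<lambda>x::real. -1 / (z - complex_of_real x))"
  have "z - complex_of_real x \<noteq> 0" for x using z by (auto simp: complex_eq_iff)
  then have "continuous_on {0..1} R"
    unfolding R_def by (auto intro!: continuous_intros)
  moreover have "continuous_on {0..1} P"
    unfolding P_def using a
    by (intro continuous_intros continuous_on_powr') (auto intro: continuous_intros)
  ultimately have "continuous_on {0..1} (\<lambda>x. P x *\<^sub>R R x)"
    by (intro continuous_intros)
  from fundamental_theorem_of_calculus_interior[OF _ this] beta_by_parts_derivative[OF z]
  have "((\<lambda>x. (x powr (-a) * (1-x) powr a) *\<^sub>R
            ((2*complex_of_real x - 1 + complex_of_real a) / (z - complex_of_real x)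
             + complex_of_real x * (complex_of_real x - 1) / (z - complex_of_real x)^2))
          has_integral (P 1 *\<^sub>R R 1 - P 0 *\<^sub>R R 0)) {0..1}"
    unfolding P_def R_def by auto
  moreover have "P 1 = 0" "P 0 = 0" using a unfolding P_def by auto
  ultimately show ?thesis by simp
qed

text \<open>Hence the kernel z(z-1)/(z-x)^2 - 1 + a/(z-x) integrates to zero against the beta
  measure: its density times this kernel is c times the integrand above.\<close>

lemma beta_integral_cauchy_combination_zero:
  assumes r: "1 < r" and z: "Im z > 0"
  shows "(\<integral>x. z*(z-1) / (z - complex_of_real x)^2 - 1 + complex_of_real (1/r) / (z - complex_of_real x)
            \<partial>beta_measure r) = 0"
proof -
  define a where "a = 1/r"
  define c where "c = r * sin (pi / r) / pi"
  define \<phi> where "\<phi> = (\<lambda>x::real. z*(z-1) / (z - complex_of_real x)^2 - 1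
                                   + complex_of_real a / (z - complex_of_real x))"
  define g where "g = (\<lambda>x. (x powr (-a) * (1-x) powr a) *\<^sub>R
            ((2*complex_of_real x - 1 + complex_of_real a) / (z - complex_of_real x)
             + complex_of_real x * (complex_of_real x - 1) / (z - complex_of_real x)^2))"
  have a: "0 < a" "a < 1" using r by (auto simp: a_def)
  have g_integral: "(g has_integral 0) {0..1}"
    unfolding g_def by (rule beta_by_parts[OF z a])
  have measurable: "\<phi> \<in> borel_measurable borel" unfolding \<phi>_def by measurable
  have pointwise: "beta_dens r x *\<^sub>R \<phi> x = c *\<^sub>R (indicator {0..1} x *\<^sub>R g x)" for x
  proof (cases "x \<in> {0..1}")
    case True
    have "z \<noteq> complex_of_real x" using z by auto
    then have "\<phi> x = (2*complex_of_real x - 1 + complex_of_real a) / (z - complex_of_real x)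
                  + complex_of_real x * (complex_of_real x - 1) / (z - complex_of_real x)^2"
      unfolding \<phi>_def by (rule cauchy_combination_partial_fractions)
    with True show ?thesis
      unfolding g_def beta_dens_eq[OF r] c_def a_def by simp
  qed (simp add: beta_dens_eq[OF r])
  have density: "beta_dens r \<in> borel_measurable lborel" "\<And>x. 0 \<le> beta_dens r x"
    using borel_measurable_beta_dens beta_dens_nonneg[OF r] by auto
  have "integrable (beta_measure r) \<phi>"
    unfolding \<phi>_def
    by (rule integrable_cauchy_combination[OF prob_space_beta_measure[OF r] sets_beta_measure z])
  then have "integrable lborel (\<lambda>x. beta_dens r x *\<^sub>R \<phi> x)"
    unfolding beta_measure_def using measurable density by (subst (asm) integrable_density) auto
  then have "integrable lborel (\<lambda>x. c *\<^sub>R (indicator {0..1} x *\<^sub>R g x))"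
    unfolding pointwise .
  then have "integrable lborel (\<lambda>x. (1/c) *\<^sub>R (c *\<^sub>R (indicator {0..1} x *\<^sub>R g x)))"
    by (rule integrable_scaleR_right)
  moreover have "(1/c) *\<^sub>R (c *\<^sub>R v) = v" for v :: complex
    using sin_pi_div_pos[OF r] r by (simp add: c_def)
  ultimately have "set_integrable lborel {0..1} g"
    unfolding set_integrable_def by (simp only:)
  have "(\<integral>x. \<phi> x \<partial>beta_measure r) = (\<integral>x. beta_dens r x *\<^sub>R \<phi> x \<partial>lborel)"
    unfolding beta_measure_def using measurable density by (intro integral_density) auto
  also have "\<dots> = c *\<^sub>R set_lebesgue_integral lborel {0..1} g"
    unfolding pointwise set_lebesgue_integral_def by (rule integral_scaleR_right)
  also have "set_lebesgue_integral lborel {0..1} g = integral {0..1} g"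
    by (rule set_borel_integral_eq_integral(2)) fact
  also have "\<dots> = 0" using g_integral by (rule integral_unique)
  finally show ?thesis unfolding \<phi>_def a_def by simp
qed

lemma beta_cauchy_identity:
  assumes r: "1 < r" and z: "Im z > 0"
  shows "z*(z-1) * (\<integral>x. 1 / (z - complex_of_real x)^2 \<partial>beta_measure r)
           = 1 - complex_of_real (1/r) * cauchy_transform (beta_measure r) z"
proof -
  have "\<And>u v :: complex. u - 1 + v = 0 \<Longrightarrow> u = 1 - v" by algebra
  then show ?thesis
    using beta_integral_cauchy_combination_zero[OF r z]
      integral_cauchy_combination[OF prob_space_beta_measure[OF r] sets_beta_measure z,
        where a = "complex_of_real (1/r)"]
    by metis
qed

section \<open>The differential equation z(z-1) F' = a F - 1 on the upper half-plane\<close>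

text \<open>1 - 1/z stays in the upper half-plane, away from the branch cut of Ln.\<close>

lemma Im_one_minus_inverse_pos: "Im z > 0 \<Longrightarrow> Im (1 - 1/z) > 0"
  by (simp add: Im_divide power2_eq_square divide_pos_pos add_pos_nonneg sum_squares_gt_zero_iff)

lemma ode_first_integral_deriv:
  fixes F F' :: "complex \<Rightarrow> complex" and a z :: complex
  assumes z: "Im z > 0"
    and F: "(F has_field_derivative F' z) (at z)"
    and ode: "z*(z-1) * F' z = a * F z - 1"
  shows "((\<lambda>w. (1 - a * F w) * exp (- a * Ln (1 - 1/w))) has_field_derivative 0) (at z)"
proof -
  define E where "E = exp (- a * Ln (1 - 1/z))"
  have nonzero: "z \<noteq> 0" "z - 1 \<noteq> 0" using z by (auto simp: complex_eq_iff)
  have "1 - 1/z \<notin> \<real>\<^sub>\<le>\<^sub>0"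
    using Im_one_minus_inverse_pos[OF z] by (auto simp: complex_nonpos_Reals_iff)
  moreover have "((\<lambda>w. 1 - 1/w) has_field_derivative 1/z^2) (at z)"
    using nonzero by (auto intro!: derivative_eq_intros simp: field_simps power2_eq_square)
  ultimately have "((\<lambda>w. Ln (1 - 1/w)) has_field_derivative inverse (1 - 1/z) * (1/z^2)) (at z)"
    by (rule DERIV_chain2[OF has_field_derivative_Ln])
  also have "inverse (1 - 1/z) * (1/z^2) = 1 / (z*(z-1))"
    using nonzero by (simp add: field_simps power2_eq_square)
  finally have "((\<lambda>w. exp (- a * Ln (1 - 1/w))) has_field_derivative E * (- a * (1 / (z*(z-1))))) (at z)"
    unfolding E_def by (rule DERIV_chain2[OF DERIV_exp DERIV_cmult])
  from DERIV_mult[OF DERIV_diff[OF DERIV_const DERIV_cmult[OF F]] this]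
  have "((\<lambda>w. (1 - a * F w) * exp (- a * Ln (1 - 1/w))) has_field_derivative
          (0 - a * F' z) * E + E * (- a * (1 / (z*(z-1)))) * (1 - a * F z)) (at z)"
    unfolding E_def .
  moreover have "(0 - a * F' z) * E + E * (- a * (1 / (z*(z-1)))) * (1 - a * F z)
                   = - a * E / (z*(z-1)) * (z*(z-1) * F' z + (1 - a * F z))"
    using nonzero by (simp add: field_simps)
  ultimately show ?thesis using ode by simp
qed

lemma ode_solution_upper_half_plane:
  fixes F F' :: "complex \<Rightarrow> complex" and a :: complex
  assumes F: "\<And>z. Im z > 0 \<Longrightarrow> (F has_field_derivative F' z) (at z)"
    and ode: "\<And>z. Im z > 0 \<Longrightarrow> z*(z-1) * F' z = a * F z - 1"
    and limit: "((\<lambda>y. F (\<i> * complex_of_real y)) \<longlongrightarrow> 0) at_top"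
    and z: "Im z > 0"
  shows "1 - a * F z = (1 - 1/z) powr a"
proof -
  define K where "K = (\<lambda>w. (1 - a * F w) * exp (- a * Ln (1 - 1/w)))"
  have "(K has_field_derivative 0) (at w)" if "Im w > 0" for w
    unfolding K_def
    by (rule ode_first_integral_deriv[where F=F and F'=F' and a=a, OF that F[OF that] ode[OF that]])
  then obtain k where k: "\<And>w. Im w > 0 \<Longrightarrow> K w = k"
    using has_field_derivative_zero_constant[OF convex_halfspace_Im_gt[of 0], of K]
    by (auto intro: has_field_derivative_at_within)
  have "((\<lambda>y. 1 + \<i> * complex_of_real (inverse y)) \<longlongrightarrow> 1 + \<i> * complex_of_real 0) at_top"
    by (intro tendsto_intros tendsto_inverse_0_at_top filterlim_ident)
  moreover have "1 + \<i> * complex_of_real (inverse y) = 1 - 1 / (\<i> * complex_of_real y)" for y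
    by (simp add: divide_inverse inverse_mult_distrib)
  ultimately have "((\<lambda>y. 1 - 1 / (\<i> * complex_of_real y)) \<longlongrightarrow> 1) at_top"
    by simp
  then have K_limit: "((\<lambda>y. K (\<i> * complex_of_real y)) \<longlongrightarrow> (1 - a * 0) * exp (- a * Ln 1)) at_top"
    unfolding K_def by (intro tendsto_intros limit) (auto simp: complex_nonpos_Reals_iff)
  have "\<forall>\<^sub>F y in at_top. K (\<i> * complex_of_real y) = k"
    using eventually_gt_at_top[of 0] by eventually_elim (simp add: k)
  then have K_const: "((\<lambda>y. K (\<i> * complex_of_real y)) \<longlongrightarrow> k) at_top"
    by (rule tendsto_eventually)
  have "(1 - a * 0) * exp (- a * Ln 1) = k"
    by (rule tendsto_unique[OF _ K_limit K_const]) simp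
  then have "k = 1" by simp
  then have "1 - a * F z = exp (a * Ln (1 - 1/z))"
    using k[of z] z unfolding K_def by (simp add: exp_minus field_simps)
  moreover have "1 - 1/z \<noteq> 0" using Im_one_minus_inverse_pos[OF z] by auto
  ultimately show ?thesis by (simp add: powr_def)
qed

theorem mainTheorem14:
  fixes r :: real
  assumes "1 < r"
  shows "prob_space (beta_measure r) \<and>
    (\<forall>z. Im z > 0 \<longrightarrow>
       integrable (beta_measure r) (\<lambda>x. 1 / (z - complex_of_real x)) \<and>
       cauchy_transform (beta_measure r) z = G_fun r z)"
proof (intro conjI allI impI)
  let ?M = "beta_measure r"
  have M: "prob_space ?M" "sets ?M = sets borel"
    using prob_space_beta_measure[OF assms] sets_beta_measure by auto
  then show "prob_space ?M" by simp
  fix z :: complex assume z: "Im z > 0"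
  show "integrable ?M (\<lambda>x. 1 / (z - complex_of_real x))"
    by (rule integrable_cauchy_kernel[OF M z])
  have "1 - complex_of_real (1/r) * cauchy_transform ?M z = (1 - 1/z) powr complex_of_real (1/r)"
  proof (rule ode_solution_upper_half_plane[OF cauchy_transform_has_derivative[OF M] _ _ z])
    show "w*(w-1) * - (\<integral>x. 1 / (w - complex_of_real x)^2 \<partial>?M)
            = complex_of_real (1/r) * cauchy_transform ?M w - 1" if "Im w > 0" for w
      using beta_cauchy_identity[OF assms that] by simp
  qed (use cauchy_transform_tendsto_zero[OF M] in auto)
  then show "cauchy_transform ?M z = G_fun r z"
    using assms unfolding G_fun_def by (simp add: field_simps)
qed

end
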